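(* Consider a GND instance, a reply $\varrho$-oracle ($\varrho\ge1$), and a cost sharing mechanism $M$ whose induced GND game admits an $(A,B)$-bounded potential function $\Phi$ and is $(\lambda,\mu)$-smooth with $\mu < 1/(\varrho\epsilon_1^2)$, where $\epsilon_1=\frac{1+\epsilon}{1-\epsilon}$. Let $Q = \frac{2\epsilon_1 N A}{1-\varrho\epsilon_1^2\mu}$ and $T = \lceil Q \cdot \ln(A B N^{\max_j \alpha_j}) \rceil$. Then the output $p^{t^*}$ of Alg-ABRD (run with $M$, the given $\epsilon$-cost shares and this $T$) satisfies $$C(p^{t^*}) \le \frac{2\varrho\epsilon_1^2\lambda}{1-\varrho\epsilon_1^2\mu}\cdot C^*.$$
   Context: GND instance: finite resource set $E$; requests $i \in [N]$, each with a reply collection $P_i \subseteq 2^E$ and a weight vector $w_i \in \mathbb{Z}_{\geq 1}^E$; constants $q \in \mathbb{Z}_{\ge 1}$, $\alpha_1,\dots,\alpha_q > 1$; for each $e$, $\sigma_e \geq 0$ and $\xi_{e,j} \geq 0$ (at least one $\xi_{e,j}>0$), and cost function $F_e(0)=0$, $F_e(l)=\sigma_e+\sum_j \xi_{e,j} l^{\alpha_j}$ for $l>0$. A strategy profile is $p=(p_1,\dots,p_N)\in P = P_1\times\dots\times P_N$; load $l_e^p=\sum_{i: e\in p_i} w_i(e)$; total cost $C(p)=\sum_e F_e(l_e^p)$; $C^*=\min_{p\in P} C(p)$. Notation $p_{-i}$ denotes $p$ without coordinate $i$ and $(p'_i,p_{-i})$ replaces the $i$-th coordinate by $p'_i$.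 A reply $\varrho$-oracle, given a reply collection $R$ and tolls $\tau:E\to\mathbb{R}_{>0}$, returns $r \in R$ with $\sum_{e\in r}\tau(e) \le \varrho \sum_{e \in r'}\tau(e)$ for all $r'\in R$. A cost sharing mechanism (CSM) $M=\{f_{i,e}\}$ assigns cost shares $f_{i,e}(p) \geq 0$ with $\sum_i f_{i,e}(p) = F_e(l_e^p)$; it is separable and uniform: $f_{i,e}(p)=0$ if $e \notin p_i$, and $f_{i,e}(p)$ depends only on $w_i(e)$ and the multiset of weights $w_{i'}(e)$ of the other players $i'$ with $e \in p_{i'}$. Player $i$'s individual cost is $C_i(p)=\sum_e f_{i,e}(p)$. The induced game is $(\lambda,\mu)$-smooth ($\lambda>0$, $0<\mu<1$) if $\sum_i C_i(p'_i,p_{-i}) \le \lambda C(p') + \mu C(p)$ for all $p,p'\in P$. A function $\Phi:P\to\mathbb{R}_{>0}$ is a potential function if $\Phi(p')-\Phi(p)=C_i(p')-C_i(p)$ whenever $p_{-i}=p'_{-i}$; it is $(A,B)$-bounded ($A,B\ge1$) if $\Phi(p)/A \le C(p) \le B\,\Phi(p)$ for all $p$. Alg-ABRD: fix small $\epsilon>0$. Assume values $\widetilde f_{i,e}(p)$ are fixed for all $i,e,p$ with $(1-\epsilon) f_{i,e}(p) \le \widetilde f_{i,e}(p) \le (1+\epsilon) f_{i,e}(p)$, and set $\widetilde C_i(p)=\sum_e \widetilde f_{i,e}(p)$. Initial profile $p^0$: for each $i$, $p^0_i$ is the oracle's output on $P_i$ with tolls $\tau_i^0(e)=F_e(w_i(e))$.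 For $t=1,\dots,T$: for every $i$ compute $p'_i \in P_i$ with $\widetilde C_i(p'_i,p^{t-1}_{-i}) \le \varrho\, \widetilde C_i(p''_i,p^{t-1}_{-i})$ for all $p''_i\in P_i$, and let $\delta_i^t=\widetilde C_i(p^{t-1}) - \epsilon_1 \widetilde C_i(p'_i,p^{t-1}_{-i})$. If $\delta_i^t \le 0$ for all $i$, set $p^t=p^{t-1}$ and stop. Otherwise let $\Delta^t=\sum_i \delta_i^t$, pick $j$ with $\delta_j^t>0$ and $\delta_j^t \ge \Delta^t/N$, and set $p^t=(p'_j,p^{t-1}_{-j})$. Finally output a generated profile $p^{t^*}$ of minimum total cost $C$. *)

theory Defs
  imports "HOL-Analysis.Analysis" "HOL-Library.Multiset"
begin

(* Players are 0..<N; resources have type 'e, the resource set is E.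
   A strategy profile is an extensional function p :: nat => 'e set
   in  Pi\<^sub>E {..<N} P  (p i = undefined for i >= N). *)

type_synonym 'e profile = "nat \<Rightarrow> 'e set"

definition profiles :: "nat \<Rightarrow> (nat \<Rightarrow> 'e set set) \<Rightarrow> 'e profile set" where
  "profiles N P = Pi\<^sub>E {..<N} P"

definition costF :: "('e \<Rightarrow> real) \<Rightarrow> ('e \<Rightarrow> nat \<Rightarrow> real) \<Rightarrow> (nat \<Rightarrow> real) \<Rightarrow> nat
                      \<Rightarrow> 'e \<Rightarrow> nat \<Rightarrow> real" where
  "costF \<sigma> \<xi> \<alpha> q e l = (if l = 0 then 0 else \<sigma> e + (\<Sum>j<q. \<xi> e j * real l powr \<alpha> j))"

definition gnd_instance ::
  "'e set \<Rightarrow> nat \<Rightarrow> (nat \<Rightarrow> 'e set set) \<Rightarrow> (nat \<Rightarrow> 'e \<Rightarrow> nat) \<Rightarrow> nat \<Rightarrow> (nat \<Rightarrow> real)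
   \<Rightarrow> ('e \<Rightarrow> real) \<Rightarrow> ('e \<Rightarrow> nat \<Rightarrow> real) \<Rightarrow> bool" where
  "gnd_instance E N P w q \<alpha> \<sigma> \<xi> \<longleftrightarrow>
     finite E \<and> N \<ge> 1 \<and> q \<ge> 1 \<and>
     (\<forall>i<N. P i \<subseteq> Pow E \<and> P i \<noteq> {}) \<and>
     (\<forall>i<N. \<forall>e\<in>E. w i e \<ge> 1) \<and>
     (\<forall>j<q. \<alpha> j > 1) \<and>
     (\<forall>e\<in>E. \<sigma> e \<ge> 0 \<and> (\<forall>j<q. \<xi> e j \<ge> 0) \<and> (\<exists>j<q. \<xi> e j > 0))"

definition load :: "nat \<Rightarrow> (nat \<Rightarrow> 'e \<Rightarrow> nat) \<Rightarrow> 'e profile \<Rightarrow> 'e \<Rightarrow> nat" where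
  "load N w p e = (\<Sum>i\<in>{i. i < N \<and> e \<in> p i}. w i e)"

definition total_cost :: "'e set \<Rightarrow> ('e \<Rightarrow> nat \<Rightarrow> real) \<Rightarrow> nat \<Rightarrow> (nat \<Rightarrow> 'e \<Rightarrow> nat)
                           \<Rightarrow> 'e profile \<Rightarrow> real" where
  "total_cost E F N w p = (\<Sum>e\<in>E. F e (load N w p e))"

definition opt_cost :: "'e set \<Rightarrow> ('e \<Rightarrow> nat \<Rightarrow> real) \<Rightarrow> nat \<Rightarrow> (nat \<Rightarrow> 'e set set)
                         \<Rightarrow> (nat \<Rightarrow> 'e \<Rightarrow> nat) \<Rightarrow> real" where
  "opt_cost E F N P w = Min (total_cost E F N w ` profiles N P)"

definition reply_rho_orc :: "'e set \<Rightarrow> nat \<Rightarrow> (nat \<Rightarrow> 'e set set) \<Rightarrow> real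
                             \<Rightarrow> ('e set set \<Rightarrow> ('e \<Rightarrow> real) \<Rightarrow> 'e set) \<Rightarrow> bool" where
  "reply_rho_orc E N P \<rho> orc \<longleftrightarrow>
     (\<forall>i<N. \<forall>\<tau>. (\<forall>e\<in>E. \<tau> e > 0) \<longrightarrow>
        orc (P i) \<tau> \<in> P i \<and> (\<forall>r'\<in>P i. sum \<tau> (orc (P i) \<tau>) \<le> \<rho> * sum \<tau> r'))"

definition others_weights :: "nat \<Rightarrow> (nat \<Rightarrow> 'e \<Rightarrow> nat) \<Rightarrow> 'e profile \<Rightarrow> nat \<Rightarrow> 'e \<Rightarrow> nat multiset" where
  "others_weights N w p i e = image_mset (\<lambda>k. w k e) (mset_set {k. k < N \<and> k \<noteq> i \<and> e \<in> p k})"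

definition is_csm :: "'e set \<Rightarrow> ('e \<Rightarrow> nat \<Rightarrow> real) \<Rightarrow> nat \<Rightarrow> (nat \<Rightarrow> 'e set set)
                       \<Rightarrow> (nat \<Rightarrow> 'e \<Rightarrow> nat) \<Rightarrow> (nat \<Rightarrow> 'e \<Rightarrow> 'e profile \<Rightarrow> real) \<Rightarrow> bool" where
  "is_csm E F N P w f \<longleftrightarrow>
     (\<forall>p\<in>profiles N P. \<forall>e\<in>E.
        (\<forall>i<N. f i e p \<ge> 0 \<and> (e \<notin> p i \<longrightarrow> f i e p = 0)) \<and>
        (\<Sum>i<N. f i e p) = F e (load N w p e)) \<and>
     (\<forall>p\<in>profiles N P. \<forall>p'\<in>profiles N P. \<forall>i<N. \<forall>i'<N. \<forall>e\<in>E.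
        e \<in> p i \<longrightarrow> e \<in> p' i' \<longrightarrow> w i e = w i' e \<longrightarrow>
        others_weights N w p i e = others_weights N w p' i' e \<longrightarrow> f i e p = f i' e p')"

definition indiv_cost :: "'e set \<Rightarrow> (nat \<Rightarrow> 'e \<Rightarrow> 'e profile \<Rightarrow> real) \<Rightarrow> nat \<Rightarrow> 'e profile \<Rightarrow> real" where
  "indiv_cost E f i p = (\<Sum>e\<in>E. f i e p)"

definition smooth_game :: "'e set \<Rightarrow> ('e \<Rightarrow> nat \<Rightarrow> real) \<Rightarrow> nat \<Rightarrow> (nat \<Rightarrow> 'e set set)
    \<Rightarrow> (nat \<Rightarrow> 'e \<Rightarrow> nat) \<Rightarrow> (nat \<Rightarrow> 'e \<Rightarrow> 'e profile \<Rightarrow> real) \<Rightarrow> real \<Rightarrow> real \<Rightarrow> bool" where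
  "smooth_game E F N P w f lam \<mu> \<longleftrightarrow> lam > 0 \<and> 0 < \<mu> \<and> \<mu> < 1 \<and>
     (\<forall>p\<in>profiles N P. \<forall>p'\<in>profiles N P.
        (\<Sum>i<N. indiv_cost E f i (p(i := p' i)))
          \<le> lam * total_cost E F N w p' + \<mu> * total_cost E F N w p)"

definition potential_fun :: "'e set \<Rightarrow> nat \<Rightarrow> (nat \<Rightarrow> 'e set set)
    \<Rightarrow> (nat \<Rightarrow> 'e \<Rightarrow> 'e profile \<Rightarrow> real) \<Rightarrow> ('e profile \<Rightarrow> real) \<Rightarrow> bool" where
  "potential_fun E N P f \<Phi> \<longleftrightarrow>
     (\<forall>p\<in>profiles N P. \<Phi> p > 0) \<and>
     (\<forall>p\<in>profiles N P. \<forall>p'\<in>profiles N P. \<forall>i<N.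
        (\<forall>k<N. k \<noteq> i \<longrightarrow> p' k = p k) \<longrightarrow>
        \<Phi> p' - \<Phi> p = indiv_cost E f i p' - indiv_cost E f i p)"

definition bounded_potential :: "'e set \<Rightarrow> ('e \<Rightarrow> nat \<Rightarrow> real) \<Rightarrow> nat \<Rightarrow> (nat \<Rightarrow> 'e set set)
    \<Rightarrow> (nat \<Rightarrow> 'e \<Rightarrow> nat) \<Rightarrow> ('e profile \<Rightarrow> real) \<Rightarrow> real \<Rightarrow> real \<Rightarrow> bool" where
  "bounded_potential E F N P w \<Phi> A B \<longleftrightarrow> A \<ge> 1 \<and> B \<ge> 1 \<and>
     (\<forall>p\<in>profiles N P. \<Phi> p / A \<le> total_cost E F N w p \<and> total_cost E F N w p \<le> B * \<Phi> p)"

definition approx_shares :: "'e set \<Rightarrow> nat \<Rightarrow> (nat \<Rightarrow> 'e set set) \<Rightarrow> real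
    \<Rightarrow> (nat \<Rightarrow> 'e \<Rightarrow> 'e profile \<Rightarrow> real) \<Rightarrow> (nat \<Rightarrow> 'e \<Rightarrow> 'e profile \<Rightarrow> real) \<Rightarrow> bool" where
  "approx_shares E N P \<epsilon> f ft \<longleftrightarrow>
     (\<forall>p\<in>profiles N P. \<forall>i<N. \<forall>e\<in>E.
        (1 - \<epsilon>) * f i e p \<le> ft i e p \<and> ft i e p \<le> (1 + \<epsilon>) * f i e p)"

(* One iteration t of Alg-ABRD from profile p to profile p'; stop = True iff the
   stopping branch was taken.  The replies br i are the computed p'_i. *)
definition abrd_step :: "'e set \<Rightarrow> nat \<Rightarrow> (nat \<Rightarrow> 'e set set) \<Rightarrow> real \<Rightarrow> real
    \<Rightarrow> (nat \<Rightarrow> 'e \<Rightarrow> 'e profile \<Rightarrow> real) \<Rightarrow> 'e profile \<Rightarrow> 'e profile \<Rightarrow> bool \<Rightarrow> bool" where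
  "abrd_step E N P \<rho> \<epsilon>\<^sub>1 ft p p' stop \<longleftrightarrow>
     (\<exists>br. (\<forall>i<N. br i \<in> P i \<and>
              (\<forall>r\<in>P i. indiv_cost E ft i (p(i := br i)) \<le> \<rho> * indiv_cost E ft i (p(i := r)))) \<and>
        (let \<delta> = (\<lambda>i. indiv_cost E ft i p - \<epsilon>\<^sub>1 * indiv_cost E ft i (p(i := br i))) in
          (if (\<forall>i<N. \<delta> i \<le> 0) then p' = p \<and> stop
           else \<not> stop \<and>
             (\<exists>j<N. \<delta> j > 0 \<and> \<delta> j \<ge> (\<Sum>i<N. \<delta> i) / real N \<and> p' = p(j := br j)))))"

definition abrd_run :: "'e set \<Rightarrow> nat \<Rightarrow> (nat \<Rightarrow> 'e set set) \<Rightarrow> (nat \<Rightarrow> 'e \<Rightarrow> nat)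
    \<Rightarrow> ('e \<Rightarrow> nat \<Rightarrow> real) \<Rightarrow> ('e set set \<Rightarrow> ('e \<Rightarrow> real) \<Rightarrow> 'e set) \<Rightarrow> real \<Rightarrow> real
    \<Rightarrow> (nat \<Rightarrow> 'e \<Rightarrow> 'e profile \<Rightarrow> real) \<Rightarrow> nat \<Rightarrow> (nat \<Rightarrow> 'e profile) \<Rightarrow> nat \<Rightarrow> bool" where
  "abrd_run E N P w F orc \<rho> \<epsilon>\<^sub>1 ft T ps tstop \<longleftrightarrow>
     ps 0 = (\<lambda>i\<in>{..<N}. orc (P i) (\<lambda>e. F e (w i e))) \<and>
     tstop \<le> T \<and>
     (\<forall>t\<in>{1..tstop}. \<exists>stop. abrd_step E N P \<rho> \<epsilon>\<^sub>1 ft (ps (t - 1)) (ps t) stop \<and>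
         (stop \<longrightarrow> t = tstop) \<and> (t = tstop \<and> tstop < T \<longrightarrow> stop)) \<and>
     (tstop < T \<longrightarrow> tstop \<ge> 1)"

definition abrd_output :: "'e set \<Rightarrow> ('e \<Rightarrow> nat \<Rightarrow> real) \<Rightarrow> nat \<Rightarrow> (nat \<Rightarrow> 'e \<Rightarrow> nat)
    \<Rightarrow> (nat \<Rightarrow> 'e profile) \<Rightarrow> nat \<Rightarrow> nat \<Rightarrow> bool" where
  "abrd_output E F N w ps tstop tout \<longleftrightarrow> tout \<le> tstop \<and>
     (\<forall>t\<le>tstop. total_cost E F N w (ps tout) \<le> total_cost E F N w (ps t))"

end

theory Submission
  imports Defs
begin

text \<open>
  Fix an optimal profile \<open>p\<^sup>*\<close> and put \<open>\<kappa> = 1 - \<rho> \<epsilon>\<^sub>1\<^sup>2 \<mu>\<close>. Comparing each player's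
  \<open>\<rho>\<close>-approximate best response with its strategy in \<open>p\<^sup>*\<close> and summing with smoothness, the
  improvements \<open>\<delta>\<^sub>i\<close> available at a profile \<open>p\<close> add up to at least
  \<open>(1 - \<epsilon>)(\<kappa> C(p) - \<rho> \<epsilon>\<^sub>1\<^sup>2 \<lambda> C(p\<^sup>*))\<close>. So the algorithm can only stop at a profile within
  the claimed ratio, and while \<open>C(p)\<close> exceeds it, the moving player (who gets at least the
  average improvement) lowers the potential by the factor \<open>1 - 1/Q\<close>, since the potential
  tracks individual costs exactly and is at most \<open>A C(p)\<close>. The oracle's initial profile
  costs at most \<open>\<rho> N\<^sup>M C(p\<^sup>*)\<close> by the power mean inequality, and \<open>T\<close> steps shrink the
  potential by \<open>1/(A B N\<^sup>M)\<close>, which by the \<open>(A, B)\<close>-bounds brings the cost down to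
  \<open>\<rho> C(p\<^sup>*)\<close>, itself within the ratio.
\<close>

lemma powr_sum_le_card_powr_sum:
  fixes x :: "'a \<Rightarrow> real"
  assumes "finite S" "S \<noteq> {}" and x: "\<And>i. i \<in> S \<Longrightarrow> x i > 0" and a: "a \<ge> 1"
  shows "(\<Sum>i\<in>S. x i) powr a \<le> real (card S) powr (a - 1) * (\<Sum>i\<in>S. x i powr a)"
proof -
  define k where "k = real (card S)"
  have k: "k > 0" using assms by (simp add: k_def card_gt_0_iff)
  have "(\<Sum>i\<in>S. (1/k) *\<^sub>R x i) powr a \<le> (\<Sum>i\<in>S. (1/k) * x i powr a)"
    by (rule convex_on_sum[OF assms(1,2) powr_convex[OF a]]) (use x k in \<open>auto simp: k_def\<close>)
  hence "((\<Sum>i\<in>S. x i) / k) powr a \<le> (\<Sum>i\<in>S. x i powr a) / k"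
    by (simp add: sum_divide_distrib[symmetric] sum_distrib_left[symmetric] divide_inverse mult.commute)
  hence "(\<Sum>i\<in>S. x i) powr a / k powr a \<le> (\<Sum>i\<in>S. x i powr a) / k"
    using x by (simp add: powr_divide sum_nonneg less_imp_le)
  hence "(\<Sum>i\<in>S. x i) powr a \<le> (\<Sum>i\<in>S. x i powr a) / k * k powr a"
    using k by (simp add: divide_le_eq)
  also have "\<dots> = k powr (a - 1) * (\<Sum>i\<in>S. x i powr a)"
    using k by (simp add: powr_diff)
  finally show ?thesis by (simp add: k_def)
qed

lemma one_minus_inverse_power_le_exp:
  fixes Q :: real
  assumes "Q \<ge> 1"
  shows "(1 - 1 / Q) ^ n \<le> exp (- (real n / Q))"
proof (cases "n = 0")
  case False
  have "real n / Q \<le> real n" using assms by (simp add: divide_le_eq mult_le_cancel_left1)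
  from exp_ge_one_minus_x_over_n_power_n[OF this] False assms show ?thesis by simp
qed simp

lemma sum_users_swap:
  fixes g :: "nat \<Rightarrow> 'e \<Rightarrow> 'b::comm_monoid_add"
  assumes "finite E" "\<And>i. i < N \<Longrightarrow> p i \<subseteq> E"
  shows "(\<Sum>e\<in>E. \<Sum>i\<in>{i. i < N \<and> e \<in> p i}. g i e) = (\<Sum>i<N. \<Sum>e\<in>p i. g i e)"
proof -
  have "(\<Sum>e\<in>E. \<Sum>i\<in>{i. i < N \<and> e \<in> p i}. g i e) = (\<Sum>e\<in>E. \<Sum>i<N. if e \<in> p i then g i e else 0)"
    by (intro sum.cong refl sum.mono_neutral_cong_left) auto
  also have "\<dots> = (\<Sum>i<N. \<Sum>e\<in>E. if e \<in> p i then g i e else 0)" by (rule sum.swap)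
  also have "\<dots> = (\<Sum>i<N. \<Sum>e\<in>p i. g i e)"
    using assms by (intro sum.cong refl sum.mono_neutral_cong_right) auto
  finally show ?thesis .
qed

lemma profiles_upd: "p \<in> profiles N P \<Longrightarrow> i < N \<Longrightarrow> r \<in> P i \<Longrightarrow> p(i := r) \<in> profiles N P"
  unfolding profiles_def by (metis PiE_fun_upd insert_absorb lessThan_iff)

lemma profiles_memD: "p \<in> profiles N P \<Longrightarrow> i < N \<Longrightarrow> p i \<in> P i"
  unfolding profiles_def by auto

lemma opt_cost_attained:
  assumes "finite E" "\<And>i. i < N \<Longrightarrow> P i \<subseteq> Pow E" "\<And>i. i < N \<Longrightarrow> P i \<noteq> {}"
  obtains p where "p \<in> profiles N P" "total_cost E F N w p = opt_cost E F N P w"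
proof -
  have "profiles N P \<subseteq> Pi\<^sub>E {..<N} (\<lambda>_. Pow E)"
    using assms(2) unfolding profiles_def by (auto simp: PiE_iff)
  moreover have "finite (Pi\<^sub>E {..<N} (\<lambda>_. Pow E))" using assms(1) by (intro finite_PiE) auto
  ultimately have "finite (profiles N P)" by (rule finite_subset)
  moreover have "profiles N P \<noteq> {}"
    using assms(3) unfolding profiles_def by (simp add: PiE_eq_empty_iff)
  ultimately have "opt_cost E F N P w \<in> total_cost E F N w ` profiles N P"
    unfolding opt_cost_def by simp
  thus thesis using that by (metis imageE)
qed

lemma costF_nonneg:
  assumes "\<sigma> e \<ge> 0" "\<And>j. j < q \<Longrightarrow> \<xi> e j \<ge> 0"
  shows "costF \<sigma> \<xi> \<alpha> q e l \<ge> 0"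
  using assms by (auto simp: costF_def intro!: add_nonneg_nonneg sum_nonneg mult_nonneg_nonneg)

lemma costF_pos:
  assumes "\<sigma> e \<ge> 0" "\<And>j. j < q \<Longrightarrow> \<xi> e j \<ge> 0" "j < q" "\<xi> e j > 0" "l \<ge> 1"
  shows "costF \<sigma> \<xi> \<alpha> q e l > 0"
proof -
  have "0 < \<xi> e j * real l powr \<alpha> j" using assms by simp
  also have "\<dots> \<le> (\<Sum>j<q. \<xi> e j * real l powr \<alpha> j)"
    by (rule member_le_sum) (use assms in auto)
  finally show ?thesis using assms by (simp add: costF_def)
qed

lemma costF_mono:
  assumes "\<And>j. j < q \<Longrightarrow> \<xi> e j \<ge> 0" "\<And>j. j < q \<Longrightarrow> \<alpha> j \<ge> 0" "1 \<le> l" "l \<le> l'"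
  shows "costF \<sigma> \<xi> \<alpha> q e l \<le> costF \<sigma> \<xi> \<alpha> q e l'"
proof -
  have "(\<Sum>j<q. \<xi> e j * real l powr \<alpha> j) \<le> (\<Sum>j<q. \<xi> e j * real l' powr \<alpha> j)"
    by (intro sum_mono mult_left_mono powr_mono2) (use assms in auto)
  thus ?thesis using assms by (simp add: costF_def)
qed

text \<open>The power mean inequality handles the polynomial terms, \<open>card S \<ge> 1\<close> the constant term.\<close>
lemma costF_sum_le:
  fixes x :: "'i \<Rightarrow> nat"
  assumes S: "finite S" "card S \<le> n" and x: "\<And>i. i \<in> S \<Longrightarrow> x i \<ge> 1"
    and \<sigma>: "\<sigma> e \<ge> 0" and \<xi>: "\<And>j. j < q \<Longrightarrow> \<xi> e j \<ge> 0"
    and \<alpha>: "\<And>j. j < q \<Longrightarrow> 1 \<le> \<alpha> j \<and> \<alpha> j \<le> M" and M: "M \<ge> 1"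
  shows "costF \<sigma> \<xi> \<alpha> q e (\<Sum>i\<in>S. x i) \<le> real n powr (M - 1) * (\<Sum>i\<in>S. costF \<sigma> \<xi> \<alpha> q e (x i))"
proof (cases "S = {}")
  case True thus ?thesis by (simp add: costF_def)
next
  case False
  define c where "c = real n powr (M - 1)"
  have card1: "real (card S) \<ge> 1" using False S(1) by (simp add: Suc_le_eq card_gt_0_iff)
  hence c1: "c \<ge> 1" using S(2) M unfolding c_def by (intro ge_one_powr_ge_zero) auto
  have sum1: "(\<Sum>i\<in>S. x i) \<ge> 1"
    using False S(1) x by (metis all_not_in_conv member_le_sum order_trans zero_le)
  have mean: "real (\<Sum>i\<in>S. x i) powr \<alpha> j \<le> c * (\<Sum>i\<in>S. real (x i) powr \<alpha> j)" if j: "j < q" for j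
  proof -
    have "real (\<Sum>i\<in>S. x i) powr \<alpha> j \<le> real (card S) powr (\<alpha> j - 1) * (\<Sum>i\<in>S. real (x i) powr \<alpha> j)"
      unfolding of_nat_sum
      by (rule powr_sum_le_card_powr_sum[OF S(1) False]) (use x \<alpha>[OF j] in \<open>force+\<close>)
    also have "\<dots> \<le> c * (\<Sum>i\<in>S. real (x i) powr \<alpha> j)"
    proof (rule mult_right_mono)
      have "real (card S) powr (\<alpha> j - 1) \<le> real n powr (\<alpha> j - 1)"
        using S(2) \<alpha>[OF j] by (intro powr_mono2) auto
      also have "\<dots> \<le> c" unfolding c_def using \<alpha>[OF j] card1 S(2) by (intro powr_mono) auto
      finally show "real (card S) powr (\<alpha> j - 1) \<le> c" .
    qed (auto intro: sum_nonneg)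
    finally show ?thesis .
  qed
  have "1 * \<sigma> e \<le> (c * real (card S)) * \<sigma> e"
    using c1 card1 \<sigma> by (intro mult_right_mono) (auto intro: order_trans[OF _ mult_mono[of 1 c 1]])
  hence const: "\<sigma> e \<le> c * (real (card S) * \<sigma> e)" by (simp add: mult.assoc)
  have "costF \<sigma> \<xi> \<alpha> q e (\<Sum>i\<in>S. x i) = \<sigma> e + (\<Sum>j<q. \<xi> e j * real (\<Sum>i\<in>S. x i) powr \<alpha> j)"
    using sum1 by (simp add: costF_def)
  also have "\<dots> \<le> c * (real (card S) * \<sigma> e) + (\<Sum>j<q. \<xi> e j * (c * (\<Sum>i\<in>S. real (x i) powr \<alpha> j)))"
    using const \<xi> mean by (intro add_mono sum_mono mult_left_mono) auto
  also have "\<dots> = c * (\<Sum>i\<in>S. \<sigma> e + (\<Sum>j<q. \<xi> e j * real (x i) powr \<alpha> j))"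
    by (simp add: sum.distrib sum.swap[of _ S] sum_distrib_left algebra_simps)
  also have "\<dots> = c * (\<Sum>i\<in>S. costF \<sigma> \<xi> \<alpha> q e (x i))"
    using x by (intro arg_cong[where f = "(*) c"] sum.cong refl) (force simp: costF_def)
  finally show ?thesis unfolding c_def .
qed

section \<open>The initial profile\<close>

lemma reply_rho_orcD:
  assumes "reply_rho_orc E N P \<rho> orc" "\<And>i e. i < N \<Longrightarrow> e \<in> E \<Longrightarrow> \<tau> i e > 0"
  shows "(\<lambda>i\<in>{..<N}. orc (P i) (\<tau> i)) \<in> profiles N P"
    and "\<And>i r. i < N \<Longrightarrow> r \<in> P i \<Longrightarrow> sum (\<tau> i) (orc (P i) (\<tau> i)) \<le> \<rho> * sum (\<tau> i) r"
  using assms unfolding reply_rho_orc_def profiles_def by auto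

lemma costF_weight_pos:
  assumes "gnd_instance E N P w q \<alpha> \<sigma> \<xi>" "i < N" "e \<in> E"
  shows "costF \<sigma> \<xi> \<alpha> q e (w i e) > 0"
proof -
  obtain j where "j < q" "\<xi> e j > 0" using assms unfolding gnd_instance_def by blast
  thus ?thesis using assms by (intro costF_pos) (auto simp: gnd_instance_def)
qed

lemma initial_profile_in_profiles:
  assumes "gnd_instance E N P w q \<alpha> \<sigma> \<xi>" "reply_rho_orc E N P \<rho> orc"
  shows "(\<lambda>i\<in>{..<N}. orc (P i) (\<lambda>e. costF \<sigma> \<xi> \<alpha> q e (w i e))) \<in> profiles N P"
  by (rule reply_rho_orcD(1)[OF assms(2)]) (rule costF_weight_pos[OF assms(1)])

lemma costF_load_le_sum_users:
  assumes inst: "gnd_instance E N P w q \<alpha> \<sigma> \<xi>" and e: "e \<in> E"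
  shows "costF \<sigma> \<xi> \<alpha> q e (load N w p e)
           \<le> real N powr (Max (\<alpha> ` {..<q}) - 1) * (\<Sum>i\<in>{i. i < N \<and> e \<in> p i}. costF \<sigma> \<xi> \<alpha> q e (w i e))"
proof -
  define S where "S = {i. i < N \<and> e \<in> p i}"
  from inst have q1: "q \<ge> 1" and \<alpha>1: "\<And>j. j < q \<Longrightarrow> \<alpha> j > 1"
    and w1: "\<And>i. i \<in> S \<Longrightarrow> w i e \<ge> 1" and \<sigma>: "\<sigma> e \<ge> 0" and \<xi>: "\<And>j. j < q \<Longrightarrow> \<xi> e j \<ge> 0"
    using e unfolding gnd_instance_def S_def by auto
  have S: "finite S" "card S \<le> N" using card_mono[of "{..<N}" S] unfolding S_def by auto
  have \<alpha>M: "\<alpha> j \<le> Max (\<alpha> ` {..<q})" if "j < q" for j using that by (intro Max_ge) auto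
  hence M: "1 \<le> Max (\<alpha> ` {..<q})" using \<alpha>1[of 0] q1 by (meson less_imp_le order_trans zero_less_one less_le_trans)
  have \<alpha>b: "\<And>j. j < q \<Longrightarrow> 1 \<le> \<alpha> j \<and> \<alpha> j \<le> Max (\<alpha> ` {..<q})" using \<alpha>1 \<alpha>M by (auto intro: less_imp_le)
  have "costF \<sigma> \<xi> \<alpha> q e (\<Sum>i\<in>S. w i e)
      \<le> real N powr (Max (\<alpha> ` {..<q}) - 1) * (\<Sum>i\<in>S. costF \<sigma> \<xi> \<alpha> q e (w i e))"
    by (rule costF_sum_le) (fact S w1 \<sigma> \<xi> \<alpha>b M)+
  thus ?thesis unfolding load_def S_def .
qed

lemma sum_users_costF_le_load:
  assumes inst: "gnd_instance E N P w q \<alpha> \<sigma> \<xi>" and e: "e \<in> E"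
  shows "(\<Sum>i\<in>{i. i < N \<and> e \<in> p i}. costF \<sigma> \<xi> \<alpha> q e (w i e)) \<le> real N * costF \<sigma> \<xi> \<alpha> q e (load N w p e)"
proof -
  define S where "S = {i. i < N \<and> e \<in> p i}"
  have S: "finite S" "card S \<le> N" using card_mono[of "{..<N}" S] unfolding S_def by auto
  have "(\<Sum>i\<in>S. costF \<sigma> \<xi> \<alpha> q e (w i e)) \<le> real (card S) * costF \<sigma> \<xi> \<alpha> q e (load N w p e)"
  proof (rule sum_bounded_above)
    fix i assume i: "i \<in> S"
    have "w i e \<le> load N w p e" unfolding load_def S_def[symmetric] by (rule member_le_sum) (use i S in auto)
    thus "costF \<sigma> \<xi> \<alpha> q e (w i e) \<le> costF \<sigma> \<xi> \<alpha> q e (load N w p e)"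
      using inst i e unfolding gnd_instance_def S_def
      by (intro costF_mono) (auto intro: less_imp_le order.strict_trans[OF zero_less_one])
  qed
  also have "\<dots> \<le> real N * costF \<sigma> \<xi> \<alpha> q e (load N w p e)"
    using S inst e unfolding gnd_instance_def by (intro mult_right_mono costF_nonneg) auto
  finally show ?thesis unfolding S_def .
qed

lemma initial_profile_cost_le:
  fixes \<sigma> :: "'e \<Rightarrow> real" and \<xi> :: "'e \<Rightarrow> nat \<Rightarrow> real" and \<alpha> :: "nat \<Rightarrow> real" and q :: nat
  defines "F \<equiv> costF \<sigma> \<xi> \<alpha> q" and "M \<equiv> Max (\<alpha> ` {..<q})"
  assumes inst: "gnd_instance E N P w q \<alpha> \<sigma> \<xi>" and orc: "reply_rho_orc E N P \<rho> orc"
    and rho: "\<rho> \<ge> 0" and p: "p \<in> profiles N P"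
  shows "total_cost E F N w (\<lambda>i\<in>{..<N}. orc (P i) (\<lambda>e. F e (w i e)))
           \<le> \<rho> * real N powr M * total_cost E F N w p"
proof -
  from inst have finE: "finite E" and N1: "N \<ge> 1" and q1: "q \<ge> 1" and \<alpha>1: "\<And>j. j < q \<Longrightarrow> \<alpha> j > 1"
    and PE: "\<And>i. i < N \<Longrightarrow> P i \<subseteq> Pow E"
    unfolding gnd_instance_def by auto
  have "\<alpha> 0 \<le> M" unfolding M_def using q1 by (intro Max_ge) auto
  hence "M \<ge> 1" using \<alpha>1[of 0] q1 by simp
  hence c1: "real N powr (M - 1) \<ge> 1" using N1 by (intro ge_one_powr_ge_zero) auto
  define \<tau> where "\<tau> = (\<lambda>i e. F e (w i e))"
  define p0 where "p0 = (\<lambda>i\<in>{..<N}. orc (P i) (\<tau> i))"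
  have \<tau>_pos: "\<And>i e. i < N \<Longrightarrow> e \<in> E \<Longrightarrow> \<tau> i e > 0"
    unfolding \<tau>_def F_def by (rule costF_weight_pos[OF inst])
  have p0: "p0 \<in> profiles N P"
    unfolding p0_def \<tau>_def F_def by (rule initial_profile_in_profiles[OF inst orc])
  have sub: "\<And>p i. p \<in> profiles N P \<Longrightarrow> i < N \<Longrightarrow> p i \<subseteq> E"
    using PE profiles_memD by blast
  have "total_cost E F N w p0
      \<le> (\<Sum>e\<in>E. real N powr (M - 1) * (\<Sum>i\<in>{i. i < N \<and> e \<in> p0 i}. \<tau> i e))"
    unfolding total_cost_def F_def M_def \<tau>_def by (intro sum_mono costF_load_le_sum_users[OF inst])
  also have "\<dots> = real N powr (M - 1) * (\<Sum>i<N. sum (\<tau> i) (p0 i))"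
    by (simp add: sum_distrib_left[symmetric] sum_users_swap[OF finE sub[OF p0]])
  also have "\<dots> \<le> real N powr (M - 1) * (\<Sum>i<N. \<rho> * sum (\<tau> i) (p i))"
    using c1 reply_rho_orcD(2)[of E N P \<rho> orc \<tau>, OF orc \<tau>_pos] profiles_memD[OF p]
    by (intro mult_left_mono sum_mono) (auto simp: p0_def)
  also have "\<dots> = real N powr (M - 1) * \<rho> * (\<Sum>e\<in>E. \<Sum>i\<in>{i. i < N \<and> e \<in> p i}. \<tau> i e)"
    by (simp add: sum_distrib_left[symmetric] sum_users_swap[OF finE sub[OF p]] mult.assoc)
  also have "\<dots> \<le> real N powr (M - 1) * \<rho> * (\<Sum>e\<in>E. real N * F e (load N w p e))"
    using c1 rho unfolding \<tau>_def F_def by (intro mult_left_mono sum_mono sum_users_costF_le_load[OF inst]) auto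
  also have "\<dots> = (real N powr (M - 1) * real N) * \<rho> * total_cost E F N w p"
    by (simp add: total_cost_def sum_distrib_left mult_ac)
  also have "real N powr (M - 1) * real N = real N powr M"
    using N1 by (simp add: powr_diff)
  finally show ?thesis unfolding p0_def \<tau>_def by (simp only: mult_ac)
qed

section \<open>Improvement steps and the potential\<close>

locale abrd_analysis =
  fixes E :: "'e set" and N :: nat and P :: "nat \<Rightarrow> 'e set set" and w :: "nat \<Rightarrow> 'e \<Rightarrow> nat"
    and F :: "'e \<Rightarrow> nat \<Rightarrow> real" and f ft :: "nat \<Rightarrow> 'e \<Rightarrow> 'e profile \<Rightarrow> real"
    and \<Phi> :: "'e profile \<Rightarrow> real" and A B lam \<mu> \<rho> \<epsilon> \<epsilon>\<^sub>1 :: real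
  assumes N_pos: "N \<ge> 1"
    and csm: "is_csm E F N P w f"
    and potential: "potential_fun E N P f \<Phi>"
    and bounded: "bounded_potential E F N P w \<Phi> A B"
    and smooth: "smooth_game E F N P w f lam \<mu>"
    and shares: "approx_shares E N P \<epsilon> f ft"
    and eps: "0 < \<epsilon>" "\<epsilon> < 1" and eps1: "\<epsilon>\<^sub>1 = (1 + \<epsilon>) / (1 - \<epsilon>)"
    and rho: "\<rho> \<ge> 1"
    and mu_small: "\<mu> < 1 / (\<rho> * \<epsilon>\<^sub>1\<^sup>2)"
begin

text \<open>\<open>gain br p i\<close> is the algorithm's \<open>\<delta>\<^sub>i\<close> for the replies \<open>br\<close>; \<open>decay_steps\<close> is \<open>Q\<close>.\<close>

abbreviation "cost \<equiv> total_cost E F N w"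
abbreviation "ind_cost \<equiv> indiv_cost E f"
abbreviation "ind_cost_approx \<equiv> indiv_cost E ft"
abbreviation "gain br p i \<equiv> ind_cost_approx i p - \<epsilon>\<^sub>1 * ind_cost_approx i (p(i := br i))"
abbreviation "kappa \<equiv> 1 - \<rho> * \<epsilon>\<^sub>1\<^sup>2 * \<mu>"
abbreviation "approx_ratio \<equiv> 2 * \<rho> * \<epsilon>\<^sub>1\<^sup>2 * lam / kappa"
abbreviation "decay_steps \<equiv> 2 * \<epsilon>\<^sub>1 * real N * A / kappa"

lemma eps1_mult: "\<epsilon>\<^sub>1 * (1 - \<epsilon>) = 1 + \<epsilon>"
  using eps by (simp add: eps1)

lemma eps1_gt_one: "\<epsilon>\<^sub>1 > 1"
  using eps by (simp add: eps1 field_simps)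

lemma A_ge_one: "A \<ge> 1"
  using bounded by (simp add: bounded_potential_def)

lemma B_ge_one: "B \<ge> 1"
  using bounded by (simp add: bounded_potential_def)

lemma kappa_pos: "kappa > 0" and kappa_le_one: "kappa \<le> 1"
proof -
  have "\<rho> * \<epsilon>\<^sub>1\<^sup>2 > 0" using rho eps1_gt_one by (intro mult_pos_pos) auto
  thus "kappa > 0" using mu_small by (simp add: field_simps)
  show "kappa \<le> 1" using \<open>\<rho> * \<epsilon>\<^sub>1\<^sup>2 > 0\<close> smooth by (simp add: smooth_game_def)
qed

lemma decay_steps_gt_one: "decay_steps > 1"
proof -
  have "1 \<le> real N * A" using N_pos A_ge_one by (metis mult_mono' mult_1 of_nat_1 of_nat_mono order_trans zero_le_one)
  hence "\<epsilon>\<^sub>1 \<le> \<epsilon>\<^sub>1 * (real N * A)" using eps1_gt_one by simp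
  hence "1 < 2 * \<epsilon>\<^sub>1 * real N * A" using eps1_gt_one unfolding mult.assoc by linarith
  also have "\<dots> \<le> decay_steps"
    using kappa_pos mult_left_le[OF kappa_le_one, of "2 * \<epsilon>\<^sub>1 * real N * A"]
      \<open>1 < 2 * \<epsilon>\<^sub>1 * real N * A\<close> by (simp only: le_divide_eq) simp
  finally show ?thesis .
qed

lemma ind_cost_nonneg: "p \<in> profiles N P \<Longrightarrow> i < N \<Longrightarrow> ind_cost i p \<ge> 0"
  using csm unfolding is_csm_def indiv_cost_def by (auto intro!: sum_nonneg)

lemma cost_eq_sum_ind_cost: "p \<in> profiles N P \<Longrightarrow> cost p = (\<Sum>i<N. ind_cost i p)"
  using csm unfolding is_csm_def total_cost_def indiv_cost_def
  by (subst sum.swap) (auto intro!: sum.cong)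

lemma cost_nonneg: "p \<in> profiles N P \<Longrightarrow> cost p \<ge> 0"
  by (simp add: cost_eq_sum_ind_cost) (intro sum_nonneg ind_cost_nonneg, auto)

lemma ind_cost_approx_le: "p \<in> profiles N P \<Longrightarrow> i < N \<Longrightarrow> ind_cost_approx i p \<le> (1 + \<epsilon>) * ind_cost i p"
  using shares unfolding approx_shares_def indiv_cost_def by (auto simp: sum_distrib_left intro!: sum_mono)

lemma ind_cost_approx_ge: "p \<in> profiles N P \<Longrightarrow> i < N \<Longrightarrow> (1 - \<epsilon>) * ind_cost i p \<le> ind_cost_approx i p"
  using shares unfolding approx_shares_def indiv_cost_def by (auto simp: sum_distrib_left intro!: sum_mono)

lemma potential_upd:
  assumes "p \<in> profiles N P" "j < N" "r \<in> P j"
  shows "\<Phi> p - \<Phi> (p(j := r)) = ind_cost j p - ind_cost j (p(j := r))"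
proof -
  have "\<Phi> (p(j := r)) - \<Phi> p = ind_cost j (p(j := r)) - ind_cost j p"
    using potential profiles_upd[OF assms] assms(1,2) unfolding potential_fun_def by simp
  thus ?thesis by linarith
qed

lemma potential_pos: "p \<in> profiles N P \<Longrightarrow> \<Phi> p > 0"
  using potential by (simp add: potential_fun_def)

lemma potential_le_cost: "p \<in> profiles N P \<Longrightarrow> \<Phi> p \<le> A * cost p"
  using bounded A_ge_one by (auto simp: bounded_potential_def divide_le_eq mult.commute)

lemma cost_le_potential: "p \<in> profiles N P \<Longrightarrow> cost p \<le> B * \<Phi> p"
  using bounded by (simp add: bounded_potential_def)

lemma gain_lower_bound:
  assumes p: "p \<in> profiles N P" and p': "p' \<in> profiles N P" and i: "i < N"
    and br: "ind_cost_approx i (p(i := br i)) \<le> \<rho> * ind_cost_approx i (p(i := p' i))"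
  shows "(1 - \<epsilon>) * (ind_cost i p - \<rho> * \<epsilon>\<^sub>1\<^sup>2 * ind_cost i (p(i := p' i))) \<le> gain br p i"
proof -
  have dev: "p(i := p' i) \<in> profiles N P" by (rule profiles_upd[OF p i profiles_memD[OF p' i]])
  have "\<epsilon>\<^sub>1 * ind_cost_approx i (p(i := br i)) \<le> \<epsilon>\<^sub>1 * (\<rho> * ((1 + \<epsilon>) * ind_cost i (p(i := p' i))))"
    using br ind_cost_approx_le[OF dev i] rho eps1_gt_one
    by (intro mult_left_mono) (auto intro: order_trans)
  also have "\<dots> = (1 - \<epsilon>) * (\<rho> * \<epsilon>\<^sub>1\<^sup>2 * ind_cost i (p(i := p' i)))"
    unfolding eps1_mult[symmetric] by (simp add: power2_eq_square mult_ac)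
  finally show ?thesis using ind_cost_approx_ge[OF p i] by (simp add: right_diff_distrib)
qed

lemma gain_sum_lower_bound:
  assumes p: "p \<in> profiles N P" and p': "p' \<in> profiles N P"
    and br: "\<And>i. i < N \<Longrightarrow> ind_cost_approx i (p(i := br i)) \<le> \<rho> * ind_cost_approx i (p(i := p' i))"
  shows "(1 - \<epsilon>) * (kappa * cost p - \<rho> * \<epsilon>\<^sub>1\<^sup>2 * lam * cost p') \<le> (\<Sum>i<N. gain br p i)"
proof -
  have smooth_ineq: "(\<Sum>i<N. ind_cost i (p(i := p' i))) \<le> lam * cost p' + \<mu> * cost p"
    using smooth p p' unfolding smooth_game_def by blast
  have "(1 - \<epsilon>) * (kappa * cost p - \<rho> * \<epsilon>\<^sub>1\<^sup>2 * lam * cost p')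
      = (1 - \<epsilon>) * (cost p - \<rho> * \<epsilon>\<^sub>1\<^sup>2 * (lam * cost p' + \<mu> * cost p))"
    by (simp add: algebra_simps)
  also have "\<dots> \<le> (1 - \<epsilon>) * (cost p - \<rho> * \<epsilon>\<^sub>1\<^sup>2 * (\<Sum>i<N. ind_cost i (p(i := p' i))))"
    using smooth_ineq eps rho by (intro mult_left_mono diff_left_mono) auto
  also have "\<dots> = (\<Sum>i<N. (1 - \<epsilon>) * (ind_cost i p - \<rho> * \<epsilon>\<^sub>1\<^sup>2 * ind_cost i (p(i := p' i))))"
    by (simp only: cost_eq_sum_ind_cost[OF p] sum_distrib_left right_diff_distrib sum_subtractf)
  also have "\<dots> \<le> (\<Sum>i<N. gain br p i)"
    using gain_lower_bound[OF p p'] br by (intro sum_mono) auto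
  finally show ?thesis .
qed

lemma gain_le_potential_drop:
  assumes p: "p \<in> profiles N P" and j: "j < N" and br: "br j \<in> P j"
  shows "gain br p j \<le> (1 + \<epsilon>) * (\<Phi> p - \<Phi> (p(j := br j)))"
proof -
  define r where "r = br j"
  have r: "r \<in> P j" and dev: "p(j := r) \<in> profiles N P" using profiles_upd[OF p j] br by (auto simp: r_def)
  have "(1 + \<epsilon>) * ind_cost j (p(j := r)) \<le> \<epsilon>\<^sub>1 * ind_cost_approx j (p(j := r))"
    using ind_cost_approx_ge[OF dev j] eps1_gt_one mult_left_mono
    unfolding eps1_mult[symmetric] mult.assoc by fastforce
  moreover have "(1 + \<epsilon>) * (\<Phi> p - \<Phi> (p(j := r))) = (1 + \<epsilon>) * ind_cost j p - (1 + \<epsilon>) * ind_cost j (p(j := r))"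
    by (simp only: potential_upd[OF p j r] right_diff_distrib)
  ultimately show ?thesis using ind_cost_approx_le[OF p j] unfolding r_def by linarith
qed

lemma approx_ratio_pos: "approx_ratio > 0"
  using rho eps1_gt_one kappa_pos smooth by (simp add: smooth_game_def)

text \<open>Smoothness applied to \<open>p' = p\<close> forces \<open>lam + \<mu> \<ge> 1\<close> as soon as \<open>cost p > 0\<close>.\<close>
lemma rho_cost_le_approx_ratio:
  assumes p: "p \<in> profiles N P"
  shows "\<rho> * cost p \<le> approx_ratio * cost p"
proof (cases "cost p = 0")
  case False
  hence pos: "cost p > 0" using cost_nonneg[OF p] by simp
  have "cost p \<le> lam * cost p + \<mu> * cost p"
    using smooth p cost_eq_sum_ind_cost[OF p] unfolding smooth_game_def by fastforce
  hence "1 \<le> lam + \<mu>" using pos by (simp add: distrib_right[symmetric])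
  have eps1_sq: "1 \<le> \<epsilon>\<^sub>1\<^sup>2" using eps1_gt_one by simp
  hence "1 * 1 \<le> \<rho> * \<epsilon>\<^sub>1\<^sup>2" using rho by (intro mult_mono) auto
  hence mu_le: "\<mu> \<le> \<rho> * \<epsilon>\<^sub>1\<^sup>2 * \<mu>" using smooth by (simp add: smooth_game_def)
  have lam_le: "lam \<le> \<epsilon>\<^sub>1\<^sup>2 * lam" using smooth eps1_sq by (simp add: smooth_game_def)
  have "kappa \<le> 1 - \<mu>" using mu_le by linarith
  also have "\<dots> \<le> \<epsilon>\<^sub>1\<^sup>2 * lam" using \<open>1 \<le> lam + \<mu>\<close> lam_le by linarith
  also have "\<dots> \<le> 2 * \<epsilon>\<^sub>1\<^sup>2 * lam" using smooth by (simp add: smooth_game_def)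
  finally have "\<rho> * kappa \<le> \<rho> * (2 * \<epsilon>\<^sub>1\<^sup>2 * lam)" using rho by (intro mult_left_mono) auto
  hence "\<rho> \<le> approx_ratio" using kappa_pos by (simp add: le_divide_eq mult_ac)
  thus ?thesis using pos by (intro mult_right_mono) auto
qed simp

lemma gain_sum_ge_of_cost_gt:
  assumes p: "p \<in> profiles N P" and pst: "pst \<in> profiles N P"
    and large: "approx_ratio * cost pst < cost p"
    and br: "\<And>i. i < N \<Longrightarrow> ind_cost_approx i (p(i := br i)) \<le> \<rho> * ind_cost_approx i (p(i := pst i))"
  shows "(1 - \<epsilon>) * kappa * cost p / 2 \<le> (\<Sum>i<N. gain br p i)" and "0 < (\<Sum>i<N. gain br p i)"
proof -
  have "\<rho> * \<epsilon>\<^sub>1\<^sup>2 * lam * cost pst = kappa * (approx_ratio * cost pst) / 2"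
    using kappa_pos by simp
  hence "kappa * cost p / 2 \<le> kappa * cost p - \<rho> * \<epsilon>\<^sub>1\<^sup>2 * lam * cost pst"
    using large kappa_pos by (simp add: field_simps)
  hence "(1 - \<epsilon>) * (kappa * cost p / 2) \<le> (1 - \<epsilon>) * (kappa * cost p - \<rho> * \<epsilon>\<^sub>1\<^sup>2 * lam * cost pst)"
    using eps by (intro mult_left_mono) auto
  with gain_sum_lower_bound[OF p pst br] show first: "(1 - \<epsilon>) * kappa * cost p / 2 \<le> (\<Sum>i<N. gain br p i)"
    by simp
  have "cost p > 0"
    using large approx_ratio_pos cost_nonneg[OF pst] by (meson le_less_trans mult_nonneg_nonneg less_imp_le)
  hence "(1 - \<epsilon>) * kappa * cost p / 2 > 0" using eps kappa_pos by simp
  with first show "0 < (\<Sum>i<N. gain br p i)" by linarith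
qed

lemma abrd_step_profile:
  assumes "p \<in> profiles N P" "abrd_step E N P \<rho> \<epsilon>\<^sub>1 ft p p' stop"
  shows "p' \<in> profiles N P"
  using assms unfolding abrd_step_def Let_def by (auto split: if_splits intro: profiles_upd)

lemma abrd_step_stop_cost_le:
  assumes p: "p \<in> profiles N P" and pst: "pst \<in> profiles N P"
    and step: "abrd_step E N P \<rho> \<epsilon>\<^sub>1 ft p p' True"
  shows "cost p \<le> approx_ratio * cost pst"
proof (rule ccontr)
  assume "\<not> cost p \<le> approx_ratio * cost pst"
  hence large: "approx_ratio * cost pst < cost p" by simp
  obtain br where br: "\<forall>i<N. br i \<in> P i \<and>
      (\<forall>r\<in>P i. ind_cost_approx i (p(i := br i)) \<le> \<rho> * ind_cost_approx i (p(i := r)))"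
    and "\<forall>i<N. gain br p i \<le> 0"
    using step unfolding abrd_step_def Let_def by (auto split: if_splits)
  hence "(\<Sum>i<N. gain br p i) \<le> 0" by (intro sum_nonpos) auto
  moreover have "0 < (\<Sum>i<N. gain br p i)"
    using br profiles_memD[OF pst] by (intro gain_sum_ge_of_cost_gt(2)[OF p pst large]) auto
  ultimately show False by linarith
qed

lemma abrd_step_potential_decrease:
  assumes p: "p \<in> profiles N P" and pst: "pst \<in> profiles N P"
    and step: "abrd_step E N P \<rho> \<epsilon>\<^sub>1 ft p p' stop" and large: "approx_ratio * cost pst < cost p"
  shows "\<Phi> p' \<le> (1 - 1 / decay_steps) * \<Phi> p"
proof -
  obtain br where br: "\<forall>i<N. br i \<in> P i \<and>
      (\<forall>r\<in>P i. ind_cost_approx i (p(i := br i)) \<le> \<rho> * ind_cost_approx i (p(i := r)))"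
    and move: "if \<forall>i<N. gain br p i \<le> 0 then p' = p \<and> stop
      else \<not> stop \<and> (\<exists>j<N. 0 < gain br p j \<and> (\<Sum>i<N. gain br p i) / real N \<le> gain br p j \<and> p' = p(j := br j))"
    using step unfolding abrd_step_def Let_def by blast
  have br_pst: "\<And>i. i < N \<Longrightarrow> ind_cost_approx i (p(i := br i)) \<le> \<rho> * ind_cost_approx i (p(i := pst i))"
    using br profiles_memD[OF pst] by blast
  have moving: "\<not> (\<forall>i<N. gain br p i \<le> 0)"
    using gain_sum_ge_of_cost_gt(2)[OF p pst large br_pst] sum_nonpos[of "{..<N}" "gain br p"] by force
  then obtain j where j: "j < N" "(\<Sum>i<N. gain br p i) / real N \<le> gain br p j" and p': "p' = p(j := br j)"
    using move unfolding if_not_P[OF moving] by blast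
  have "(1 + \<epsilon>) * (\<Phi> p / decay_steps) = (1 - \<epsilon>) * kappa * (\<Phi> p / A) / 2 / real N"
    using eps1_gt_one kappa_pos N_pos A_ge_one unfolding eps1_mult[symmetric] by (simp add: field_simps)
  also have "\<dots> \<le> (1 - \<epsilon>) * kappa * cost p / 2 / real N"
    using potential_le_cost[OF p] A_ge_one eps kappa_pos N_pos
    by (intro divide_right_mono mult_left_mono) (auto simp: divide_le_eq mult.commute)
  also have "\<dots> \<le> (\<Sum>i<N. gain br p i) / real N"
    using gain_sum_ge_of_cost_gt(1)[OF p pst large br_pst] by (intro divide_right_mono) auto
  also have "\<dots> \<le> (1 + \<epsilon>) * (\<Phi> p - \<Phi> p')"
    using j br gain_le_potential_drop[OF p j(1), of br] unfolding p' by auto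
  finally have "\<Phi> p / decay_steps \<le> \<Phi> p - \<Phi> p'"
    using eps by (subst (asm) mult_le_cancel_left_pos) auto
  moreover have "(1 - 1 / decay_steps) * \<Phi> p = \<Phi> p - \<Phi> p / decay_steps"
    by (simp add: algebra_simps)
  ultimately show ?thesis by linarith
qed

section \<open>Runs of the algorithm\<close>

lemma abrd_run_step:
  assumes "abrd_run E N P w F orc \<rho> \<epsilon>\<^sub>1 ft T ps tstop" "1 \<le> t" "t \<le> tstop"
  obtains stop where "abrd_step E N P \<rho> \<epsilon>\<^sub>1 ft (ps (t - 1)) (ps t) stop"
    and "t = tstop \<Longrightarrow> tstop < T \<Longrightarrow> stop"
proof -
  have "t \<in> {1..tstop}" using assms(2,3) by simp
  with assms(1) obtain stop where "abrd_step E N P \<rho> \<epsilon>\<^sub>1 ft (ps (t - 1)) (ps t) stop"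
    and "t = tstop \<and> tstop < T \<longrightarrow> stop"
    unfolding abrd_run_def by blast
  thus thesis using that by blast
qed

lemma abrd_run_profiles:
  assumes run: "abrd_run E N P w F orc \<rho> \<epsilon>\<^sub>1 ft T ps tstop" and p0: "ps 0 \<in> profiles N P"
  shows "t \<le> tstop \<Longrightarrow> ps t \<in> profiles N P"
proof (induction t)
  case (Suc t)
  obtain stop where "abrd_step E N P \<rho> \<epsilon>\<^sub>1 ft (ps t) (ps (Suc t)) stop"
    using abrd_run_step[OF run _ Suc.prems] by auto
  with Suc show ?case by (simp add: abrd_step_profile)
qed (rule p0)

lemma abrd_run_reaches_horizon:
  assumes run: "abrd_run E N P w F orc \<rho> \<epsilon>\<^sub>1 ft T ps tstop"
    and p0: "ps 0 \<in> profiles N P" and pst: "pst \<in> profiles N P"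
    and large: "\<And>t. t \<le> tstop \<Longrightarrow> approx_ratio * cost pst < cost (ps t)"
  shows "tstop = T"
proof (rule ccontr)
  assume "tstop \<noteq> T"
  hence "tstop < T" "1 \<le> tstop" using run unfolding abrd_run_def by auto
  then obtain stop where "abrd_step E N P \<rho> \<epsilon>\<^sub>1 ft (ps (tstop - 1)) (ps tstop) stop" "stop"
    by (metis abrd_run_step[OF run] order_refl)
  hence "cost (ps (tstop - 1)) \<le> approx_ratio * cost pst"
    using abrd_run_profiles[OF run p0] pst by (intro abrd_step_stop_cost_le) auto
  thus False using large[of "tstop - 1"] by simp
qed

lemma decay_rate_nonneg: "0 \<le> 1 - 1 / decay_steps"
proof -
  have "\<And>d :: real. 1 < d \<Longrightarrow> 0 \<le> 1 - 1 / d" by simp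
  thus ?thesis using decay_steps_gt_one by blast
qed

lemma abrd_run_potential_decay:
  assumes run: "abrd_run E N P w F orc \<rho> \<epsilon>\<^sub>1 ft T ps tstop"
    and p0: "ps 0 \<in> profiles N P" and pst: "pst \<in> profiles N P"
    and large: "\<And>t. t \<le> tstop \<Longrightarrow> approx_ratio * cost pst < cost (ps t)"
  shows "t \<le> tstop \<Longrightarrow> \<Phi> (ps t) \<le> (1 - 1 / decay_steps) ^ t * \<Phi> (ps 0)"
proof (induction t)
  case (Suc t)
  obtain stop where "abrd_step E N P \<rho> \<epsilon>\<^sub>1 ft (ps t) (ps (Suc t)) stop"
    using abrd_run_step[OF run, of "Suc t"] Suc.prems by auto
  hence "\<Phi> (ps (Suc t)) \<le> (1 - 1 / decay_steps) * \<Phi> (ps t)"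
    using abrd_run_profiles[OF run p0, of t] Suc.prems pst large[of t]
    by (intro abrd_step_potential_decrease) auto
  also have "\<dots> \<le> (1 - 1 / decay_steps) * ((1 - 1 / decay_steps) ^ t * \<Phi> (ps 0))"
    using Suc decay_rate_nonneg by (intro mult_left_mono) auto
  finally show ?case by (simp add: mult.assoc)
qed simp

lemma decay_rate_power_le:
  assumes "x > 0" and horizon: "decay_steps * ln x \<le> real T"
  shows "(1 - 1 / decay_steps) ^ T \<le> 1 / x"
proof -
  have "(1 - 1 / decay_steps) ^ T \<le> exp (- (real T / decay_steps))"
    using decay_steps_gt_one by (intro one_minus_inverse_power_le_exp) simp
  also have "\<dots> \<le> exp (- ln x)"
  proof -
    have "\<And>d y :: real. 0 < d \<Longrightarrow> d * y \<le> real T \<Longrightarrow> y \<le> real T / d"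
      by (simp add: pos_le_divide_eq mult.commute)
    from this[OF _ horizon] decay_steps_gt_one show ?thesis by simp
  qed
  also have "\<dots> = 1 / x" using assms(1) by (simp add: exp_minus inverse_eq_divide)
  finally show ?thesis .
qed

lemma abrd_output_cost_le:
  assumes run: "abrd_run E N P w F orc \<rho> \<epsilon>\<^sub>1 ft T ps tstop"
    and out: "abrd_output E F N w ps tstop tout"
    and p0: "ps 0 \<in> profiles N P" and pst: "pst \<in> profiles N P"
    and K: "K > 0" and init: "cost (ps 0) \<le> \<rho> * K * cost pst"
    and horizon: "decay_steps * ln (A * B * K) \<le> real T"
  shows "cost (ps tout) \<le> approx_ratio * cost pst"
proof (rule ccontr)
  assume "\<not> ?thesis"
  hence large: "approx_ratio * cost pst < cost (ps t)" if "t \<le> tstop" for t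
    using out that unfolding abrd_output_def by fastforce
  have T: "tstop = T" by (rule abrd_run_reaches_horizon[OF run p0 pst large])
  have ABK: "A * B * K > 0" using A_ge_one B_ge_one K by simp
  have "cost (ps T) \<le> B * \<Phi> (ps T)"
    using abrd_run_profiles[OF run p0] T by (intro cost_le_potential) simp
  also have "\<dots> \<le> B * ((1 - 1 / decay_steps) ^ T * \<Phi> (ps 0))"
    using abrd_run_potential_decay[OF run p0 pst large, of T] T B_ge_one by (intro mult_left_mono) auto
  also have "\<dots> \<le> B * (1 / (A * B * K) * (A * cost (ps 0)))"
  proof (intro mult_left_mono mult_mono)
    show "(1 - 1 / decay_steps) ^ T \<le> 1 / (A * B * K)" by (rule decay_rate_power_le[OF ABK horizon])
    show "\<Phi> (ps 0) \<le> A * cost (ps 0)" by (rule potential_le_cost[OF p0])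
    show "0 \<le> \<Phi> (ps 0)" using potential_pos[OF p0] by (rule less_imp_le)
    show "0 \<le> 1 / (A * B * K)" using ABK by simp
    show "0 \<le> B" using B_ge_one by simp
  qed
  also have "\<dots> = cost (ps 0) / K" using A_ge_one B_ge_one by simp
  also have "\<dots> \<le> \<rho> * cost pst" using init K by (simp add: divide_le_eq mult_ac)
  also have "\<dots> \<le> approx_ratio * cost pst" by (rule rho_cost_le_approx_ratio[OF pst])
  finally show False using large[of T] T by simp
qed

end

theorem theorem5p3:
  fixes E :: "'e set" and N :: nat and P :: "nat \<Rightarrow> 'e set set" and w :: "nat \<Rightarrow> 'e \<Rightarrow> nat"
    and q :: nat and \<alpha> :: "nat \<Rightarrow> real" and \<sigma> :: "'e \<Rightarrow> real" and \<xi> :: "'e \<Rightarrow> nat \<Rightarrow> real"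
    and orc :: "'e set set \<Rightarrow> ('e \<Rightarrow> real) \<Rightarrow> 'e set" and \<rho> :: real
    and f ft :: "nat \<Rightarrow> 'e \<Rightarrow> 'e profile \<Rightarrow> real" and \<Phi> :: "'e profile \<Rightarrow> real"
    and A B lam \<mu> \<epsilon> :: real and ps :: "nat \<Rightarrow> 'e profile" and tstop tout :: nat
  defines "F \<equiv> costF \<sigma> \<xi> \<alpha> q"
    and "\<epsilon>\<^sub>1 \<equiv> (1 + \<epsilon>) / (1 - \<epsilon>)"
  defines "Q \<equiv> 2 * \<epsilon>\<^sub>1 * real N * A / (1 - \<rho> * \<epsilon>\<^sub>1\<^sup>2 * \<mu>)"
  defines "T \<equiv> nat \<lceil>Q * ln (A * B * real N powr (Max (\<alpha> ` {..<q})))\<rceil>"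
  assumes inst: "gnd_instance E N P w q \<alpha> \<sigma> \<xi>"
    and orc_spec: "reply_rho_orc E N P \<rho> orc" and rho: "\<rho> \<ge> 1"
    and csm: "is_csm E F N P w f"
    and pot: "potential_fun E N P f \<Phi>"
    and bnd: "bounded_potential E F N P w \<Phi> A B"
    and smooth: "smooth_game E F N P w f lam \<mu>"
    and eps: "0 < \<epsilon>" "\<epsilon> < 1"
    and mu: "\<mu> < 1 / (\<rho> * \<epsilon>\<^sub>1\<^sup>2)"
    and shares: "approx_shares E N P \<epsilon> f ft"
    and run: "abrd_run E N P w F orc \<rho> \<epsilon>\<^sub>1 ft T ps tstop"
    and out: "abrd_output E F N w ps tstop tout"
  shows "total_cost E F N w (ps tout)
           \<le> 2 * \<rho> * \<epsilon>\<^sub>1\<^sup>2 * lam / (1 - \<rho> * \<epsilon>\<^sub>1\<^sup>2 * \<mu>) * opt_cost E F N P w"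
proof -
  from inst have finE: "finite E" and N: "N \<ge> 1"
    and PE: "\<And>i. i < N \<Longrightarrow> P i \<subseteq> Pow E" and Pne: "\<And>i. i < N \<Longrightarrow> P i \<noteq> {}"
    by (auto simp: gnd_instance_def)
  interpret abrd_analysis E N P w F f ft \<Phi> A B lam \<mu> \<rho> \<epsilon> \<epsilon>\<^sub>1
    by (rule abrd_analysis.intro[OF N csm pot bnd smooth shares eps meta_eq_to_obj_eq[OF \<epsilon>\<^sub>1_def] rho mu])
  obtain pst where pst: "pst \<in> profiles N P" "cost pst = opt_cost E F N P w"
    by (rule opt_cost_attained[OF finE PE Pne])
  have ps0: "ps 0 = (\<lambda>i\<in>{..<N}. orc (P i) (\<lambda>e. costF \<sigma> \<xi> \<alpha> q e (w i e)))"
    using run unfolding abrd_run_def F_def by (elim conjE)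
  have p0: "ps 0 \<in> profiles N P"
    unfolding ps0 by (rule initial_profile_in_profiles[OF inst orc_spec])
  have init: "cost (ps 0) \<le> \<rho> * real N powr Max (\<alpha> ` {..<q}) * cost pst"
    unfolding ps0 F_def by (rule initial_profile_cost_le[OF inst orc_spec _ pst(1)]) (use rho in simp)
  have horizon: "decay_steps * ln (A * B * real N powr Max (\<alpha> ` {..<q})) \<le> real T"
    unfolding T_def Q_def by (rule real_nat_ceiling_ge)
  have "real N powr Max (\<alpha> ` {..<q}) > 0" using N by simp
  from abrd_output_cost_le[OF run out p0 pst(1) this init horizon] show ?thesis
    unfolding pst(2) .
qed

end
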